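(* Let $k\ge 2$ and let $W\in\mathcal W^2_{(3k+1)\times 5}$ be such that the word $W^t[1..4]$ formed by its first four columns is a $2$-full word of $\mathcal W^2_{(3k+1)\times 4}$. Then $e(W^t[5])\le -5/3$.
   Context: A 2-dimensional binary word of dimensions $h\times w$ is an $h\times w$ matrix with entries in $\{\square,\blacksquare\}$ (filled cells $\blacksquare$, empty cells $\square$); $|U|_\blacksquare$ is the number of filled cells of $U$. Two cells $(i,j),(i',j')$ are adjacent if $|i-i'|+|j-j'|=1$; the degree of a filled cell is the number of filled cells adjacent to it. $\mathcal W^2_{h\times w}$ is the set of $h\times w$ binary words in which every filled cell has degree at most $2$; $W$ is $2$-full if $|W|_\blacksquare$ is maximal in $\mathcal W^2_{h\times w}$. $W^t[j]$ denotes column $j$ of $W$ (an $h\times 1$ word) and $W^t[j..j']$ the word formed by columns $j$ through $j'$. The excess of an $a\times b$ word $U$ is $e(U)=|U|_\blacksquare-2ab/3$; thus for a column of height $3k+1$, $e=|\text{column}|_\blacksquare-2(3k+1)/3$. *)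

theory Defs
  imports Main Complex_Main
begin

text \<open>An h x w binary word is represented by its set of filled cells (i,j),
  0-indexed, with i < h (row) and j < w (column). Empty cells are the remaining
  positions of {0..<h} x {0..<w}.\<close>

definition bwords :: "nat \<Rightarrow> nat \<Rightarrow> (nat \<times> nat) set set" where
  "bwords h w = {U. U \<subseteq> {0..<h} \<times> {0..<w}}"

definition adjacent :: "nat \<times> nat \<Rightarrow> nat \<times> nat \<Rightarrow> bool" where
  "adjacent c d \<longleftrightarrow>
     \<bar>int (fst c) - int (fst d)\<bar> + \<bar>int (snd c) - int (snd d)\<bar> = 1"

definition degree :: "(nat \<times> nat) set \<Rightarrow> nat \<times> nat \<Rightarrow> nat" where
  "degree U c = card {d \<in> U. adjacent c d}"

definition W2 :: "nat \<Rightarrow> nat \<Rightarrow> (nat \<times> nat) set set" where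
  "W2 h w = {U \<in> bwords h w. \<forall>c\<in>U. degree U c \<le> 2}"

definition two_full :: "nat \<Rightarrow> nat \<Rightarrow> (nat \<times> nat) set \<Rightarrow> bool" where
  "two_full h w U \<longleftrightarrow> U \<in> W2 h w \<and> (\<forall>V\<in>W2 h w. card V \<le> card U)"

text \<open>Columns j..j' (0-indexed, inclusive) of U, re-indexed to start at column 0.\<close>
definition cols :: "(nat \<times> nat) set \<Rightarrow> nat \<Rightarrow> nat \<Rightarrow> (nat \<times> nat) set" where
  "cols U j j' = {(i, c - j) | i c. (i, c) \<in> U \<and> j \<le> c \<and> c \<le> j'}"

definition excess :: "nat \<Rightarrow> nat \<Rightarrow> (nat \<times> nat) set \<Rightarrow> real" where
  "excess a b U = real (card U) - 2 * real a * real b / 3"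

end

theory Submission
  imports Defs
begin

text \<open>
  Read the word row by row. The degree condition only couples three consecutive rows, and
  for the future of the scan a row matters only through itself and its set of saturated
  cells, those that already have two filled neighbours in the row itself or the row above.
  Weighting the first four columns by 2 and the fifth by 1, a potential on these states,
  periodic with period 3, shows that a word of height \<open>3k+1 \<ge> 4\<close> and width 5 with all
  degrees at most 2 has weight at most \<open>18k+7\<close>. The potential is the maximal excess over
  \<open>6\<close> per row of the weight with which a state can be reached; it was computed by dynamic
  programming, and its defining inequalities are checked by evaluation. An explicit
  staircase shows that a 2-full word of height \<open>3k+1\<close> and width 4 has at least \<open>8k+4\<close>
  cells, so the fifth column has at most \<open>2k-1\<close> cells and its excess is at most
  \<open>2k-1-(6k+2)/3 = -5/3\<close>.
\<close>

lemma adjacent_iff: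
  "adjacent (i, j) (a, b) \<longleftrightarrow>
     (a = Suc i \<and> b = j) \<or> (a = i \<and> b = Suc j) \<or> (Suc a = i \<and> b = j) \<or> (a = i \<and> Suc b = j)"
  unfolding adjacent_def by auto

lemma degree_eq:
  "degree U (i, j) = of_bool ((Suc i, j) \<in> U) + of_bool ((i, Suc j) \<in> U)
     + of_bool (0 < i \<and> (i - 1, j) \<in> U) + of_bool (0 < j \<and> (i, j - 1) \<in> U)"
proof -
  define N where "N = {(Suc i, j), (i, Suc j)} \<union> (if 0 < i then {(i - 1, j)} else {})
    \<union> (if 0 < j then {(i, j - 1)} else {})"
  have "{d \<in> U. adjacent (i, j) d} = N \<inter> U"
    unfolding N_def by (auto simp: adjacent_iff)
  then have "degree U (i, j) = (\<Sum>d\<in>N. of_bool (d \<in> U))"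
    by (simp add: degree_def N_def Int_def)
  also have "\<dots> = of_bool ((Suc i, j) \<in> U) + of_bool ((i, Suc j) \<in> U)
     + of_bool (0 < i \<and> (i - 1, j) \<in> U) + of_bool (0 < j \<and> (i, j - 1) \<in> U)"
    unfolding N_def by (cases i; cases j) (simp_all del: sum_of_bool_eq)
  finally show ?thesis .
qed

datatype row = R bool bool bool bool bool

fun cell :: "row \<Rightarrow> nat \<Rightarrow> bool" where
  "cell (R a b c d e) j \<longleftrightarrow> j = 0 \<and> a \<or> j = 1 \<and> b \<or> j = 2 \<and> c \<or> j = 3 \<and> d \<or> j = 4 \<and> e"

definition row_of :: "(nat \<Rightarrow> bool) \<Rightarrow> row" where
  "row_of f = R (f 0) (f 1) (f 2) (f 3) (f 4)"

definition zero_row :: row where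
  "zero_row = R False False False False False"

definition word_row :: "(nat \<times> nat) set \<Rightarrow> nat \<Rightarrow> row" where
  "word_row U i = row_of (\<lambda>j. (i, j) \<in> U)"

definition row_above :: "(nat \<times> nat) set \<Rightarrow> nat \<Rightarrow> row" where
  "row_above U i = (if i = 0 then zero_row else word_row U (i - 1))"

definition hdegree :: "row \<Rightarrow> nat \<Rightarrow> nat" where
  "hdegree r j = of_bool (0 < j \<and> cell r (j - 1)) + of_bool (cell r (Suc j))"

fun weight :: "row \<Rightarrow> int" where
  "weight (R a b c d e) = 2 * (of_bool a + of_bool b + of_bool c + of_bool d) + of_bool e"

lemma all_less_5: "(\<forall>j<5. P j) \<longleftrightarrow> P 0 \<and> P 1 \<and> P 2 \<and> P 3 \<and> P (4::nat)"
  by (auto simp: less_Suc_eq numeral_eq_Suc)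

lemma all_row_iff: "(\<forall>r. P r) \<longleftrightarrow> (\<forall>a b c d e. P (R a b c d e))"
  by (metis row.exhaust)

lemma cell_row_of [simp]: "cell (row_of f) j \<longleftrightarrow> j < 5 \<and> f j"
  by (auto simp: row_of_def eval_nat_numeral less_Suc_eq)

lemma cell_zero_row [simp]: "\<not> cell zero_row j"
  by (simp add: zero_row_def)

lemma cell_less_5: "cell r j \<Longrightarrow> j < 5"
  by (cases r) auto

definition window_ok :: "row \<Rightarrow> row \<Rightarrow> row \<Rightarrow> bool" where
  "window_ok p c n \<longleftrightarrow>
     (\<forall>j<5. cell c j \<longrightarrow> of_bool (cell p j) + hdegree c j + of_bool (cell n j) \<le> 2)"

lemma degree_word_row:
  assumes "U \<subseteq> UNIV \<times> {..<5}"
  shows "degree U (i, j) =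
    of_bool (cell (row_above U i) j) + hdegree (word_row U i) j + of_bool (cell (word_row U (Suc i)) j)"
proof -
  have mem: "(a, b) \<in> U \<longleftrightarrow> cell (word_row U a) b" for a b
    using assms by (auto simp: word_row_def)
  show ?thesis
    by (cases i) (simp_all add: degree_eq mem hdegree_def row_above_def ac_simps)
qed

lemma degree_le_2_iff_window_ok:
  assumes "U \<subseteq> UNIV \<times> {..<5}"
  shows "(\<forall>x\<in>U. degree U x \<le> 2) \<longleftrightarrow>
    (\<forall>i. window_ok (row_above U i) (word_row U i) (word_row U (Suc i)))"
proof -
  have mem: "(i, j) \<in> U \<longleftrightarrow> cell (word_row U i) j" for i j
    using assms by (auto simp: word_row_def)
  have "(\<forall>x\<in>U. degree U x \<le> 2) \<longleftrightarrow> (\<forall>i j. cell (word_row U i) j \<longrightarrow> degree U (i, j) \<le> 2)"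
    by (auto simp: mem[symmetric])
  then show ?thesis
    using cell_less_5 by (auto simp: window_ok_def degree_word_row[OF assms])
qed

definition saturated :: "row \<Rightarrow> row \<Rightarrow> row" where
  "saturated p c = row_of (\<lambda>j. cell c j \<and> 2 \<le> of_bool (cell p j) + hdegree c j)"

definition admissible :: "row \<Rightarrow> row \<Rightarrow> row \<Rightarrow> bool" where
  "admissible c s n \<longleftrightarrow> (\<forall>j<5. cell c j \<and> cell n j \<longrightarrow> \<not> cell s j \<and> hdegree n j \<le> 1)"

lemma window_ok_admissible:
  assumes "window_ok p c n" and "window_ok c n m"
  shows "admissible c (saturated p c) n"
  using assms unfolding window_ok_def admissible_def saturated_def by fastforce

lemma saturated_R:
  "saturated (R p0 p1 p2 p3 p4) (R c0 c1 c2 c3 c4) =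
     R (c0 \<and> p0 \<and> c1) (c1 \<and> (p1 \<and> (c0 \<or> c2) \<or> c0 \<and> c2)) (c2 \<and> (p2 \<and> (c1 \<or> c3) \<or> c1 \<and> c3))
       (c3 \<and> (p3 \<and> (c2 \<or> c4) \<or> c2 \<and> c4)) (c4 \<and> p4 \<and> c3)"
  by (simp add: saturated_def row_of_def hdegree_def)

lemma admissible_R:
  "admissible (R c0 c1 c2 c3 c4) (R s0 s1 s2 s3 s4) (R n0 n1 n2 n3 n4) \<longleftrightarrow>
     (c0 \<and> n0 \<longrightarrow> \<not> s0) \<and> (c1 \<and> n1 \<longrightarrow> \<not> s1 \<and> \<not> (n0 \<and> n2)) \<and>
     (c2 \<and> n2 \<longrightarrow> \<not> s2 \<and> \<not> (n1 \<and> n3)) \<and> (c3 \<and> n3 \<longrightarrow> \<not> s3 \<and> \<not> (n2 \<and> n4)) \<and>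
     (c4 \<and> n4 \<longrightarrow> \<not> s4)"
  by (simp add: admissible_def hdegree_def all_less_5)

lemma potential_walk_bound:
  fixes pot :: "nat \<Rightarrow> 's \<Rightarrow> int option" and w :: "nat \<Rightarrow> int"
  assumes start: "pot 0 (x 0) = Some v0"
    and step: "\<And>i v. pot i (x i) = Some v \<Longrightarrow> \<exists>v'. pot (Suc i) (x (Suc i)) = Some v' \<and> v + w i \<le> v' + c"
  shows "\<exists>v. pot n (x n) = Some v \<and> v0 + (\<Sum>i<n. w i) \<le> v + c * int n"
proof (induction n)
  case 0
  show ?case using start by simp
next
  case (Suc n)
  then obtain v where v: "pot n (x n) = Some v" "v0 + (\<Sum>i<n. w i) \<le> v + c * int n"
    by blast
  with step obtain v' where "pot (Suc n) (x (Suc n)) = Some v'" "v + w n \<le> v' + c"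
    by blast
  with v show ?case
    by (auto simp: algebra_simps)
qed

text \<open>
  The entry \<open>(s, a, b, d)\<close> of \<open>potentials c\<close> gives the potential of the state \<open>(c, s)\<close>
  after a number of rows congruent to 0, 1, 2 modulo 3; states that never occur are absent.
\<close>

fun potentials :: "row \<Rightarrow> (row \<times> int \<times> int \<times> int) list" where
  "potentials (R False False False False False) =
     [(R False False False False False, - 4, - 3, - 3)]"
| "potentials (R True False False False False) =
     [(R False False False False False, - 2, - 3, - 1)]"
| "potentials (R False True False False False) =
     [(R False False False False False, - 2, - 2, - 3)]"
| "potentials (R True True False False False) =
     [(R False False False False False, - 2, - 3, - 1),
      (R True False False False False, 0, - 1, - 1),
      (R False True False False False, - 2, - 1, - 1),
      (R True True False False False, - 1, - 2, - 1)]"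
| "potentials (R False False True False False) =
     [(R False False False False False, - 2, - 2, - 3)]"
| "potentials (R True False True False False) =
     [(R False False False False False, - 1, - 1, - 1)]"
| "potentials (R False True True False False) =
     [(R False False False False False, - 1, - 2, - 3),
      (R False True False False False, - 1, 0, - 1),
      (R False False True False False, - 1, - 1, - 1),
      (R False True True False False, - 4, - 2, - 3)]"
| "potentials (R True True True False False) =
     [(R False True False False False, - 1, - 1, - 1),
      (R True True False False False, 1, 0, - 1),
      (R False True True False False, - 1, - 1, - 1),
      (R True True True False False, 1, 1, 1)]"
| "potentials (R False False False True False) =
     [(R False False False False False, - 2, - 2, - 2)]"
| "potentials (R True False False True False) =
     [(R False False False False False, - 1, - 1, 0)]"
| "potentials (R False True False True False) =
     [(R False False False False False, - 1, - 1, - 1)]"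
| "potentials (R True True False True False) =
     [(R False False False False False, - 1, - 1, 0),
      (R True False False False False, 1, 0, 0),
      (R False True False False False, 0, 0, 0),
      (R True True False False False, 0, - 1, 1)]"
| "potentials (R False False True True False) =
     [(R False False False False False, - 2, - 2, - 3),
      (R False False True False False, - 2, 0, - 1),
      (R False False False True False, - 1, - 1, - 1),
      (R False False True True False, - 3, - 2, - 2)]"
| "potentials (R True False True True False) =
     [(R False False False False False, 0, - 1, - 1),
      (R False False True False False, 0, 0, 1),
      (R False False False True False, 0, 1, 1),
      (R False False True True False, - 1, 0, 0)]"
| "potentials (R False True True True False) =
     [(R False False True False False, 0, - 2, - 3),
      (R False True True False False, 0, 0, - 1),
      (R False False True True False, 0, - 1, - 1),
      (R False True True True False, 0, 1, 1)]"
| "potentials (R True True True True False) =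
     [(R False True True False False, 0, - 1, - 1),
      (R True True True False False, 2, 0, - 1),
      (R False True True True False, 0, 1, 1),
      (R True True True True False, 2, 1, 1)]"
| "potentials (R False False False False True) =
     [(R False False False False False, - 3, - 3, - 2)]"
| "potentials (R True False False False True) =
     [(R False False False False False, - 2, - 3, 0)]"
| "potentials (R False True False False True) =
     [(R False False False False False, - 2, - 1, - 2)]"
| "potentials (R True True False False True) =
     [(R False False False False False, - 2, - 2, - 1),
      (R True False False False False, 0, - 1, 0),
      (R False True False False False, - 1, - 1, 0),
      (R True True False False False, 0, - 1, 0)]"
| "potentials (R False False True False True) =
     [(R False False False False False, - 2, - 1, - 2)]"
| "potentials (R True False True False True) =
     [(R False False False False False, 0, - 1, 0)]"
| "potentials (R False True True False True) =
     [(R False False False False False, 0, - 1, - 2),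
      (R False True False False False, 0, 1, 0),
      (R False False True False False, 0, - 1, 0),
      (R False True True False False, - 3, - 1, - 2)]"
| "potentials (R True True True False True) =
     [(R False True False False False, 0, - 1, 0),
      (R True True False False False, 2, 1, 0),
      (R False True True False False, 0, 0, 0),
      (R True True True False False, 2, 1, 2)]"
| "potentials (R False False False True True) =
     [(R False False False False False, - 2, - 2, - 2),
      (R False False False True False, - 2, - 1, - 1),
      (R False False False False True, - 1, - 1, - 2),
      (R False False False True True, - 3, - 3, - 2)]"
| "potentials (R True False False True True) =
     [(R False False False False False, - 2, - 2, - 1),
      (R False False False True False, 0, - 1, 1),
      (R False False False False True, - 1, - 1, 0),
      (R False False False True True, - 1, - 1, 0)]"
| "potentials (R False True False True True) =
     [(R False False False False False, - 2, - 1, - 2),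
      (R False False False True False, 0, 0, - 1),
      (R False False False False True, - 1, - 1, - 2),
      (R False False False True True, - 1, - 1, 0)]"
| "potentials (R True True False True True) =
     [(R False False False False False, - 2, - 1, - 1),
      (R True False False False False, 0, 0, 0),
      (R False True False False False, 0, 0, 0),
      (R True True False False False, 0, - 1, - 1),
      (R False False False True False, 0, - 1, 1),
      (R True False False True False, 2, 1, 1),
      (R False True False True False, 0, 1, 1),
      (R True True False True False, 1, 0, 1),
      (R False False False False True, - 1, - 1, 0),
      (R True False False False True, 1, 1, 0),
      (R False True False False True, 1, 1, 0),
      (R True True False False True, 0, - 1, 0),
      (R False False False True True, - 1, - 1, - 1),
      (R True False False True True, 0, - 1, 0),
      (R False True False True True, - 1, - 1, 0),
      (R True True False True True, 0, - 1, 2)]"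
| "potentials (R False False True True True) =
     [(R False False False True False, - 2, - 1, - 2),
      (R False False True True False, - 2, 0, - 1),
      (R False False False True True, - 1, - 1, - 2),
      (R False False True True True, - 1, 1, 0)]"
| "potentials (R True False True True True) =
     [(R False False False True False, 0, - 1, 0),
      (R False False True True False, 0, 0, 1),
      (R False False False True True, 1, 0, 0),
      (R False False True True True, 1, 1, 2)]"
| "potentials (R False True True True True) =
     [(R False False True True False, 0, - 1, - 2),
      (R False True True True False, 0, 1, 0),
      (R False False True True True, 1, - 1, - 2),
      (R False True True True True, 1, 1, 0)]"
| "potentials (R True True True True True) =
     [(R False True True True False, 0, - 1, 0),
      (R True True True True False, 2, 1, 0),
      (R False True True True True, 1, 0, 0),
      (R True True True True True, 3, 1, 0)]"

definition potential :: "nat \<Rightarrow> row \<Rightarrow> row \<Rightarrow> int option" where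
  "potential t c s = map_option (\<lambda>(a, b, d). [a, b, d] ! (t mod 3)) (map_of (potentials c) s)"

lemma potentials_step_check:
  "\<forall>t\<in>{0, 1, 2}. \<forall>c. \<forall>(s, _)\<in>set (potentials c). \<forall>n.
     admissible c s n \<longrightarrow>
     (case (potential t c s, potential (Suc t) n (saturated c n)) of
        (Some v, Some v') \<Rightarrow> v + weight n \<le> v' + 6
      | _ \<Rightarrow> False)"
  apply (simp only: all_row_iff all_bool_eq ball_simps(5,7))
  apply (intro conjI)
  apply (simp_all add: potential_def admissible_R saturated_R)
  done

lemma potentials_start_check:
  "\<forall>r n. admissible r (saturated zero_row r) n \<longrightarrow>
     (case potential 2 n (saturated r n) of
        Some v \<Rightarrow> weight r + weight n \<le> v + 12
      | None \<Rightarrow> False)"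
  apply (simp only: all_row_iff all_bool_eq)
  apply (intro conjI)
  apply (simp_all add: potential_def admissible_R saturated_R zero_row_def)
  done

lemma potentials_phase_1_le: "\<forall>c. \<forall>(_, _, b, _)\<in>set (potentials c). b \<le> 1"
  by (simp add: all_row_iff all_bool_eq)

lemma potential_step:
  assumes "potential t c s = Some v" and "admissible c s n"
  shows "\<exists>v'. potential (Suc t) n (saturated c n) = Some v' \<and> v + weight n \<le> v' + 6"
proof -
  obtain x where "map_of (potentials c) s = Some x"
    using assms(1) by (auto simp: potential_def)
  then have entry: "(s, x) \<in> set (potentials c)"
    by (rule map_of_SomeD)
  have "t mod 3 \<in> {0, 1, 2}"
    by auto
  from potentials_step_check[THEN bspec, OF this, THEN spec[of _ c], THEN bspec, OF entry]
  have "case (potential (t mod 3) c s, potential (Suc (t mod 3)) n (saturated c n)) of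
      (Some v, Some v') \<Rightarrow> v + weight n \<le> v' + 6 | _ \<Rightarrow> False"
    using assms(2) by simp
  moreover have "potential (t mod 3) = potential t" "potential (Suc (t mod 3)) = potential (Suc t)"
    by (simp_all add: potential_def mod_Suc_eq fun_eq_iff)
  ultimately show ?thesis
    using assms(1) by (auto split: option.splits)
qed

lemma potential_start:
  assumes "admissible r (saturated zero_row r) n"
  shows "\<exists>v. potential 2 n (saturated r n) = Some v \<and> weight r + weight n \<le> v + 12"
  using potentials_start_check[rule_format, OF assms] by (auto split: option.splits)

lemma potential_le_1:
  assumes "potential t c s = Some v" and "t mod 3 = 1"
  shows "v \<le> 1"
proof -
  obtain a b d where "map_of (potentials c) s = Some (a, b, d)" and "v = b"
    using assms by (auto simp: potential_def)
  then show ?thesis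
    using potentials_phase_1_le map_of_SomeD by fastforce
qed

lemma weight_word_row:
  "weight (word_row U i) = 2 * int (card {j\<in>{..<4}. (i, j) \<in> U}) + of_bool ((i, 4) \<in> U)"
proof -
  have "int (card {j\<in>{..<4}. (i, j) \<in> U}) = (\<Sum>j<4. of_bool ((i, j) \<in> U))"
    by (simp add: Int_def)
  then show ?thesis
    by (simp add: word_row_def row_of_def eval_nat_numeral)
qed

lemma sum_weight_word_row:
  assumes "U \<subseteq> {..<h} \<times> {..<5}"
  shows "(\<Sum>i<h. weight (word_row U i)) = 2 * int (card (cols U 0 3)) + int (card (cols U 4 4))"
proof -
  have "cols U 0 3 = Sigma {..<h} (\<lambda>i. {j\<in>{..<4}. (i, j) \<in> U})"
    using assms unfolding cols_def by auto
  then have left: "card (cols U 0 3) = (\<Sum>i<h. card {j\<in>{..<4}. (i, j) \<in> U})"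
    by (simp add: card_SigmaI)
  have "cols U 4 4 = (\<lambda>i. (i, 0)) ` {i\<in>{..<h}. (i, 4) \<in> U}"
    using assms unfolding cols_def by force
  then have "card (cols U 4 4) = card {i\<in>{..<h}. (i, 4) \<in> U}"
    by (simp add: card_image inj_on_def)
  then have right: "int (card (cols U 4 4)) = (\<Sum>i<h. of_bool ((i, 4) \<in> U))"
    by (simp add: Int_def)
  show ?thesis
    unfolding weight_word_row left right by (simp add: sum.distrib sum_distrib_left)
qed

lemma sum_weight_rows_le:
  fixes r :: "nat \<Rightarrow> row"
  assumes window: "\<And>i. window_ok (if i = 0 then zero_row else r (i - 1)) (r i) (r (Suc i))"
    and "1 \<le> k"
  shows "(\<Sum>i<3 * k + 1. weight (r i)) \<le> 18 * int k + 7"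
proof -
  have adm: "admissible (r (Suc i)) (saturated (r i) (r (Suc i))) (r (Suc (Suc i)))" for i
    using window_ok_admissible window[of "Suc i"] window[of "Suc (Suc i)"] by simp
  obtain v0 where v0: "potential 2 (r 1) (saturated (r 0) (r 1)) = Some v0"
    and start: "weight (r 0) + weight (r 1) \<le> v0 + 12"
    using potential_start window_ok_admissible window[of 0] window[of 1] by fastforce
  define x where "x i = (r (Suc i), saturated (r i) (r (Suc i)))" for i
  define pot where "pot i y = potential (i + 2) (fst y) (snd y)" for i y
  have "\<exists>v. pot (3 * k - 1) (x (3 * k - 1)) = Some v \<and>
      v0 + (\<Sum>i<3 * k - 1. weight (r (Suc (Suc i)))) \<le> v + 6 * int (3 * k - 1)"
  proof (rule potential_walk_bound)
    show "pot 0 (x 0) = Some v0"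
      using v0 by (simp add: pot_def x_def numeral_2_eq_2)
    show "\<exists>v'. pot (Suc i) (x (Suc i)) = Some v' \<and> v + weight (r (Suc (Suc i))) \<le> v' + 6"
      if "pot i (x i) = Some v" for i v
      using potential_step[OF that[unfolded pot_def x_def, simplified] adm] by (simp add: pot_def x_def)
  qed
  moreover have "3 * k - 1 + 2 = 3 * k + 1"
    using assms(2) by simp
  ultimately obtain v c s where v: "potential (3 * k + 1) c s = Some v"
    and walk: "v0 + (\<Sum>i<3 * k - 1. weight (r (Suc (Suc i)))) \<le> v + 6 * int (3 * k - 1)"
    unfolding pot_def by auto
  have "v \<le> 1"
    using potential_le_1[OF v] by presburger
  have split: "3 * k + 1 = Suc (Suc (3 * k - 1))"
    using assms(2) by simp
  have "(\<Sum>i<3 * k + 1. weight (r i)) =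
      weight (r 0) + weight (r 1) + (\<Sum>i<3 * k - 1. weight (r (Suc (Suc i))))"
    unfolding split sum.lessThan_Suc_shift by (simp add: add.assoc)
  also have "\<dots> \<le> 18 * int k + 7"
    using start walk \<open>v \<le> 1\<close> assms(2) by (simp add: of_nat_diff)
  finally show ?thesis .
qed

lemma weighted_card_cols_le:
  assumes "W \<in> W2 (3 * k + 1) 5" and "1 \<le> k"
  shows "2 * card (cols W 0 3) + card (cols W 4 4) \<le> 18 * k + 7"
proof -
  have sub: "W \<subseteq> {..<3 * k + 1} \<times> {..<5}" and "\<forall>x\<in>W. degree W x \<le> 2"
    using assms(1) by (auto simp: W2_def bwords_def)
  then have "window_ok (if i = 0 then zero_row else word_row W (i - 1)) (word_row W i) (word_row W (Suc i))"
    for i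
    using degree_le_2_iff_window_ok unfolding row_above_def by blast
  then have "(\<Sum>i<3 * k + 1. weight (word_row W i)) \<le> 18 * int k + 7"
    using sum_weight_rows_le assms(2) by blast
  then show ?thesis
    using sum_weight_word_row[OF sub] by linarith
qed

definition period_row :: "nat \<Rightarrow> row" where
  "period_row m =
     (if m = 1 then R True False True True False
      else if m = 2 then R True True False True False
      else R False True True False False)"

definition staircase :: "nat \<Rightarrow> nat \<Rightarrow> row" where
  "staircase k i =
     (if i = 0 then R True True True False False
      else if i < 3 * k then period_row (i mod 3)
      else if i = 3 * k then R False True True True False
      else zero_row)"

definition staircase_word :: "nat \<Rightarrow> (nat \<times> nat) set" where
  "staircase_word k = {(i, j). cell (staircase k i) j}"

lemma word_row_staircase_word: "word_row (staircase_word k) i = staircase k i"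
  by (cases "staircase k i") (simp add: word_row_def row_of_def staircase_word_def)

lemma staircase_word_subset: "staircase_word k \<subseteq> {..<3 * k + 1} \<times> {..<4}"
  by (auto simp: staircase_word_def staircase_def period_row_def split: if_splits)

lemma window_ok_period_row:
  "window_ok (if j = 0 then R True True True False False else period_row (j mod 3))
     (period_row (Suc j mod 3)) (period_row (Suc (Suc j) mod 3))"
proof -
  have "j mod 3 = 0 \<or> j mod 3 = 1 \<or> j mod 3 = 2"
    by arith
  then show ?thesis
    by (elim disjE) (simp_all add: mod_Suc period_row_def window_ok_def all_less_5 hdegree_def)
qed

lemma window_ok_staircase:
  assumes "1 \<le> k"
  shows "window_ok (row_above (staircase_word k) i) (staircase k i) (staircase k (Suc i))"
proof -
  have above: "row_above (staircase_word k) n = (if n = 0 then zero_row else staircase k (n - 1))" for n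
    by (simp add: row_above_def word_row_staircase_word)
  obtain m where k: "k = Suc m"
    using assms by (cases k) auto
  consider "i = 0" | j where "i = Suc j" "Suc i < 3 * k" | "Suc i = 3 * k" | "i = 3 * k" | "3 * k < i"
    by (metis linorder_neqE_nat not0_implies_Suc Suc_lessI)
  then show ?thesis
  proof cases
    case 1
    then show ?thesis
      using assms by (simp add: above staircase_def period_row_def window_ok_def all_less_5 hdegree_def)
  next
    case (2 j)
    then have "row_above (staircase_word k) i =
        (if j = 0 then R True True True False False else period_row (j mod 3))"
      "staircase k i = period_row (Suc j mod 3)" "staircase k (Suc i) = period_row (Suc (Suc j) mod 3)"
      by (simp_all add: above staircase_def)
    then show ?thesis
      using window_ok_period_row[of j] by simp
  next
    case 3
    with k have "i = Suc (Suc (3 * m))"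
      by simp
    then show ?thesis
      unfolding above by (simp add: staircase_def mod_Suc k period_row_def window_ok_def all_less_5 hdegree_def)
  next
    case 4
    with k have "i = Suc (Suc (Suc (3 * m)))"
      by simp
    then show ?thesis
      unfolding above by (simp add: staircase_def mod_Suc k period_row_def window_ok_def all_less_5 hdegree_def)
  next
    case 5
    then show ?thesis
      by (simp add: staircase_def window_ok_def)
  qed
qed

lemma staircase_word_in_W2:
  assumes "1 \<le> k"
  shows "staircase_word k \<in> W2 (3 * k + 1) 4"
proof -
  have "staircase_word k \<subseteq> UNIV \<times> {..<5}"
    using staircase_word_subset by fastforce
  then have "\<forall>x\<in>staircase_word k. degree (staircase_word k) x \<le> 2"
    using degree_le_2_iff_window_ok window_ok_staircase[OF assms]
    by (simp add: word_row_staircase_word)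
  moreover have "staircase_word k \<subseteq> {0..<3 * k + 1} \<times> {0..<4}"
    using staircase_word_subset by (simp add: atLeast0LessThan)
  ultimately show ?thesis
    by (simp add: W2_def bwords_def)
qed

lemma sum_mod_3:
  fixes g :: "nat \<Rightarrow> 'a::comm_semiring_1"
  shows "(\<Sum>i<3 * m. g (i mod 3)) = of_nat m * (g 0 + g 1 + g 2)"
proof (induction m)
  case 0
  show ?case by simp
next
  case (Suc m)
  have "3 * Suc m = Suc (Suc (Suc (3 * m)))"
    by simp
  then show ?case
    unfolding \<open>3 * Suc m = _\<close> using Suc.IH by (simp add: mod_Suc numeral_2_eq_2 algebra_simps)
qed

lemma sum_weight_staircase:
  assumes "1 \<le> k"
  shows "(\<Sum>i<3 * k + 1. weight (staircase k i)) = 16 * int k + 8"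
proof -
  have "(\<Sum>i<3 * k. weight (staircase k i)) =
      (\<Sum>i<3 * k. weight (period_row (i mod 3)) + (if i = 0 then 2 else 0))"
    by (rule sum.cong) (auto simp: staircase_def period_row_def)
  also have "\<dots> = (\<Sum>i<3 * k. weight (period_row (i mod 3))) + 2"
    using assms by (simp add: sum.distrib)
  also have "\<dots> = 16 * int k + 2"
    unfolding sum_mod_3[of "\<lambda>r. weight (period_row r)"] by (simp add: period_row_def)
  finally show ?thesis
    by (simp add: staircase_def)
qed

lemma card_staircase_word:
  assumes "1 \<le> k"
  shows "card (staircase_word k) = 8 * k + 4"
proof -
  have sub: "staircase_word k \<subseteq> {..<3 * k + 1} \<times> {..<5}"
    using staircase_word_subset by fastforce
  have "cols (staircase_word k) 0 3 = staircase_word k" "cols (staircase_word k) 4 4 = {}"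
    using staircase_word_subset unfolding cols_def by force+
  then show ?thesis
    using sum_weight_word_row[OF sub] sum_weight_staircase[OF assms]
    by (simp add: word_row_staircase_word)
qed

lemma two_full_card_ge:
  assumes "two_full (3 * k + 1) 4 U" and "1 \<le> k"
  shows "8 * k + 4 \<le> card U"
  using assms staircase_word_in_W2 card_staircase_word unfolding two_full_def by metis

theorem mainTheorem7:
  fixes k :: nat and W :: "(nat \<times> nat) set"
  assumes "k \<ge> 2"
    and "W \<in> W2 (3*k+1) 5"
    and "two_full (3*k+1) 4 (cols W 0 3)"
  shows "excess (3*k+1) 1 (cols W 4 4) \<le> - 5/3"
proof -
  have k: "1 \<le> k"
    using assms(1) by simp
  have "2 * card (cols W 0 3) + card (cols W 4 4) \<le> 18 * k + 7"
    using weighted_card_cols_le[OF assms(2) k] .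
  moreover have "8 * k + 4 \<le> card (cols W 0 3)"
    using two_full_card_ge[OF assms(3) k] .
  ultimately have "real (card (cols W 4 4)) \<le> 2 * real k - 1"
    by linarith
  then show ?thesis
    by (simp add: excess_def field_simps)
qed

end
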